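(* Consider the discrete first-price auction in the model without ties, with values drawn i.i.d. from a distribution with full support on $X$. If $\beta$ and $\beta'$ are both symmetric equilibrium bidding functions with $\beta(1)=\beta'(1)$, then $\beta=\beta'$. That is, the SE (if it exists) is unique up to the choice of $\beta(1)\in\{0,1\}$.
   Context: Model. There are $n\ge 2$ risk-neutral bidders competing for one indivisible object. Normalise the grid so that values and bids lie in $X=\{0,1,2,\dots,x\}$ for some $x\in\mathbb N$. Each bidder $i$ privately learns a value $v_i\in X$; values are drawn independently from a common distribution in which every element of $X$ has strictly positive probability. Each bidder submits a bid $b_i\in X$. A (pure) strategy is a bidding function $\beta:X\to X$. In the model without ties, bidder $i$ wins iff $b_i>b_j$ for all $j\neq i$ (if the highest bid is tied, nobody wins). In the first-price auction, a bidder with value $v_i$ bidding $b_i$ gets expected payoff $(v_i-b_i)\Pr(i\text{ wins})$. An equilibrium is a profile of bidding functions such that each bidder's bidding function maximises their expected payoff given the others' bidding functions (a pure-strategy Bayes–Nash equilibrium) and such that no bidder uses a weakly dominated bidding function (a bidding function is weakly dominated if some other bidding function yields at least as high expected payoff against every profile of opponents' bidding functions, and strictly higher against some). A symmetric equilibrium (SE) is an equilibrium in which all bidders use the same bidding function $\beta$. *)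

theory Defs
  imports Main "HOL-Library.Multiset" Complex_Main
begin

text \<open>Grid X = {0..x}.
  A bidding function is a map nat => nat whose restriction to X lands in X
  (only its values on X matter).\<close>

definition bidfun :: "nat \<Rightarrow> (nat \<Rightarrow> nat) \<Rightarrow> bool" where
  "bidfun x \<beta> \<longleftrightarrow> (\<forall>v\<le>x. \<beta> v \<le> x)"

definition full_support_dist :: "nat \<Rightarrow> (nat \<Rightarrow> real) \<Rightarrow> bool" where
  "full_support_dist x p \<longleftrightarrow> (\<forall>v\<le>x. p v > 0) \<and> (\<Sum>v\<le>x. p v) = 1"

definition prob_below :: "nat \<Rightarrow> (nat \<Rightarrow> real) \<Rightarrow> (nat \<Rightarrow> nat) \<Rightarrow> nat \<Rightarrow> real" where
  "prob_below x p g b = (\<Sum>w\<in>{w. w \<le> x \<and> g w < b}. p w)"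

text \<open>Opponents are indexed 0..n-2; G j is the bidding function of opponent j.
  Values are independent, so the winning probability (strictly highest bid,
  no ties) is a product.\<close>
definition win_prob :: "nat \<Rightarrow> nat \<Rightarrow> (nat \<Rightarrow> real) \<Rightarrow> (nat \<Rightarrow> nat \<Rightarrow> nat) \<Rightarrow> nat \<Rightarrow> real" where
  "win_prob n x p G b = (\<Prod>j<n-1. prob_below x p (G j) b)"

definition opp_profile :: "nat \<Rightarrow> nat \<Rightarrow> (nat \<Rightarrow> nat \<Rightarrow> nat) \<Rightarrow> bool" where
  "opp_profile n x G \<longleftrightarrow> (\<forall>j<n-1. bidfun x (G j))"

definition payoff :: "nat \<Rightarrow> nat \<Rightarrow> (nat \<Rightarrow> real) \<Rightarrow> (nat \<Rightarrow> nat) \<Rightarrow> (nat \<Rightarrow> nat \<Rightarrow> nat) \<Rightarrow> real" where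
  "payoff n x p \<beta> G = (\<Sum>v\<le>x. p v * (real v - real (\<beta> v)) * win_prob n x p G (\<beta> v))"

definition weakly_dominated :: "nat \<Rightarrow> nat \<Rightarrow> (nat \<Rightarrow> real) \<Rightarrow> (nat \<Rightarrow> nat) \<Rightarrow> bool" where
  "weakly_dominated n x p \<beta> \<longleftrightarrow>
     (\<exists>\<beta>'. bidfun x \<beta>' \<and>
        (\<forall>G. opp_profile n x G \<longrightarrow> payoff n x p \<beta> G \<le> payoff n x p \<beta>' G) \<and>
        (\<exists>G. opp_profile n x G \<and> payoff n x p \<beta> G < payoff n x p \<beta>' G))"

definition symmetric_equilibrium :: "nat \<Rightarrow> nat \<Rightarrow> (nat \<Rightarrow> real) \<Rightarrow> (nat \<Rightarrow> nat) \<Rightarrow> bool" where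
  "symmetric_equilibrium n x p \<beta> \<longleftrightarrow>
     bidfun x \<beta> \<and>
     (\<forall>\<beta>'. bidfun x \<beta>' \<longrightarrow> payoff n x p \<beta>' (\<lambda>_. \<beta>) \<le> payoff n x p \<beta> (\<lambda>_. \<beta>)) \<and>
     \<not> weakly_dominated n x p \<beta>"

end

theory Submission
  imports Defs
begin

text \<open>Undominatedness rules out bidding above one's value and, for values \<open>v \<ge> 2\<close>, bidding
  exactly \<open>v\<close> (bidding \<open>v - 1\<close> is weakly better and strictly better against opponents who
  always bid 0). Revealed preference between two types makes every symmetric equilibrium
  bidding function monotone.

  Uniqueness then follows by induction on the value. Suppose \<open>\<beta>\<close> and \<open>\<beta>'\<close> agree up to \<open>v\<close>
  but \<open>b = \<beta> (v+1) < b' = \<beta>' (v+1)\<close>. By monotonicity the two opponent bid distributions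
  put the same mass below \<open>b\<close>, whereas below \<open>b'\<close> the distribution under \<open>\<beta>'\<close> only
  contains the values \<open>\<le> v\<close> and the one under \<open>\<beta>\<close> also contains \<open>v + 1\<close>. The optimality
  conditions of type \<open>v + 1\<close> in both equilibria then force the winning probability at \<open>b'\<close>
  under \<open>\<beta>\<close> to be at most the one under \<open>\<beta>'\<close>, since \<open>b' < v + 1\<close>; a contradiction.\<close>

lemma prob_below_zero [simp]: "prob_below x p g 0 = 0"
  unfolding prob_below_def by simp

lemma prob_below_nonneg:
  assumes "full_support_dist x p"
  shows "prob_below x p g b \<ge> 0"
  using assms unfolding prob_below_def full_support_dist_def
  by (intro sum_nonneg) (auto intro: less_imp_le)

lemma prob_below_mono:
  assumes "full_support_dist x p" "b \<le> b'"
  shows "prob_below x p g b \<le> prob_below x p g b'"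
  unfolding prob_below_def
proof (rule sum_mono2)
  show "{w. w \<le> x \<and> g w < b} \<subseteq> {w. w \<le> x \<and> g w < b'}"
    using assms(2) by auto
  show "\<And>w. w \<in> {w. w \<le> x \<and> g w < b'} - {w. w \<le> x \<and> g w < b} \<Longrightarrow> 0 \<le> p w"
    using assms(1) unfolding full_support_dist_def by (auto intro: less_imp_le)
qed simp

lemma prob_below_const_zero:
  assumes "full_support_dist x p" "b \<ge> 1"
  shows "prob_below x p (\<lambda>_. 0) b = 1"
proof -
  have "{w. w \<le> x \<and> (0::nat) < b} = {..x}" using assms(2) by auto
  then show ?thesis using assms(1) unfolding prob_below_def full_support_dist_def by simp
qed

lemma sum_atMost_le_prob_below:
  assumes "full_support_dist x p" "u \<le> x" "\<And>w. w \<le> u \<Longrightarrow> g w < b"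
  shows "(\<Sum>w\<le>u. p w) \<le> prob_below x p g b"
  unfolding prob_below_def
proof (rule sum_mono2)
  show "{..u} \<subseteq> {w. w \<le> x \<and> g w < b}" using assms(2,3) by auto
  show "\<And>w. w \<in> {w. w \<le> x \<and> g w < b} - {..u} \<Longrightarrow> 0 \<le> p w"
    using assms(1) unfolding full_support_dist_def by (auto intro: less_imp_le)
qed simp

lemma prob_below_pos:
  assumes "full_support_dist x p" "w \<le> x" "g w < b"
  shows "prob_below x p g b > 0"
proof -
  have "p w \<le> prob_below x p g b"
    using assms unfolding prob_below_def full_support_dist_def
    by (intro member_le_sum) (auto intro: less_imp_le)
  moreover have "p w > 0" using assms unfolding full_support_dist_def by auto
  ultimately show ?thesis by simp
qed

lemma prob_below_eq_sum_atMost: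
  assumes "v \<le> x" "\<And>w. w \<le> v \<Longrightarrow> g w < b" "\<And>w. v < w \<Longrightarrow> w \<le> x \<Longrightarrow> b \<le> g w"
  shows "prob_below x p g b = (\<Sum>w\<le>v. p w)"
proof -
  have "{w. w \<le> x \<and> g w < b} = {..v}"
    using assms by (auto simp: not_le) (meson leD not_le)
  then show ?thesis unfolding prob_below_def by simp
qed

lemma prob_below_eq_if_agree_below:
  assumes "\<And>w. w \<le> v \<Longrightarrow> g w = g' w"
    and "\<And>w. v < w \<Longrightarrow> w \<le> x \<Longrightarrow> b \<le> g w \<and> b \<le> g' w"
  shows "prob_below x p g b = prob_below x p g' b"
proof -
  have "{w. w \<le> x \<and> g w < b} = {w. w \<le> x \<and> g' w < b}"
    using assms by (metis leD not_le)
  then show ?thesis unfolding prob_below_def by simp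
qed

lemma win_prob_symmetric: "win_prob n x p (\<lambda>_. \<beta>) c = prob_below x p \<beta> c ^ (n - 1)"
  unfolding win_prob_def by simp

lemma win_prob_nonneg:
  assumes "full_support_dist x p"
  shows "win_prob n x p G c \<ge> 0"
  unfolding win_prob_def using prob_below_nonneg[OF assms] by (simp add: prod_nonneg)

lemma win_prob_zero:
  assumes "n \<ge> 2"
  shows "win_prob n x p G 0 = 0"
  unfolding win_prob_def using assms by simp

lemma win_prob_const_zero:
  assumes "full_support_dist x p" "c \<ge> 1"
  shows "win_prob n x p (\<lambda>_ _. 0) c = 1"
  unfolding win_prob_def using prob_below_const_zero[OF assms] by simp

lemma payoff_fun_upd:
  assumes "v \<le> x"
  shows "payoff n x p (\<beta>(v := c)) G = payoff n x p \<beta> G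
     + p v * ((real v - real c) * win_prob n x p G c
              - (real v - real (\<beta> v)) * win_prob n x p G (\<beta> v))"
proof -
  let ?u = "\<lambda>\<gamma> w. p w * (real w - real (\<gamma> w)) * win_prob n x p G (\<gamma> w)"
  have "(\<Sum>w\<le>x. ?u (\<beta>(v := c)) w) - (\<Sum>w\<le>x. ?u \<beta> w)
      = (\<Sum>w\<le>x. if w = v then ?u (\<beta>(v := c)) v - ?u \<beta> v else 0)"
    by (subst sum_subtractf[symmetric], rule sum.cong) auto
  then show ?thesis using assms unfolding payoff_def by (simp add: algebra_simps)
qed

lemma weakly_dominated_by_deviation:
  assumes "bidfun x \<beta>" "v \<le> x" "c \<le> x" "p v > 0"
    and "\<And>G. opp_profile n x G \<Longrightarrow>
      (real v - real (\<beta> v)) * win_prob n x p G (\<beta> v) \<le> (real v - real c) * win_prob n x p G c"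
    and "(real v - real (\<beta> v)) * win_prob n x p (\<lambda>_ _. 0) (\<beta> v)
      < (real v - real c) * win_prob n x p (\<lambda>_ _. 0) c"
  shows "weakly_dominated n x p \<beta>"
  unfolding weakly_dominated_def
proof (intro exI conjI allI impI)
  show "bidfun x (\<beta>(v := c))" using assms(1,3) unfolding bidfun_def by auto
  show "payoff n x p \<beta> G \<le> payoff n x p (\<beta>(v := c)) G" if "opp_profile n x G" for G
    using assms(4) assms(5)[OF that] unfolding payoff_fun_upd[OF assms(2)] by simp
  show "opp_profile n x (\<lambda>_ _. 0)" unfolding opp_profile_def bidfun_def by simp
  show "payoff n x p \<beta> (\<lambda>_ _. 0) < payoff n x p (\<beta>(v := c)) (\<lambda>_ _. 0)"
    using assms(4,6) unfolding payoff_fun_upd[OF assms(2)] by simp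
qed

lemma overbidding_weakly_dominated:
  assumes "n \<ge> 2" "full_support_dist x p" "bidfun x \<beta>" "v \<le> x" "v < \<beta> v"
  shows "weakly_dominated n x p \<beta>"
proof (rule weakly_dominated_by_deviation[OF assms(3,4), of 0])
  show "p v > 0" using assms(2,4) unfolding full_support_dist_def by auto
  show "(real v - real (\<beta> v)) * win_prob n x p G (\<beta> v) \<le> (real v - real 0) * win_prob n x p G 0" for G
    using assms(5) win_prob_zero[OF assms(1)] win_prob_nonneg[OF assms(2), of n G "\<beta> v"]
    by (simp add: mult_nonpos_nonneg)
  show "(real v - real (\<beta> v)) * win_prob n x p (\<lambda>_ _. 0) (\<beta> v)
      < (real v - real 0) * win_prob n x p (\<lambda>_ _. 0) 0"
    using assms(5) win_prob_zero[OF assms(1)] win_prob_const_zero[OF assms(2), of "\<beta> v"] by simp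
qed simp

lemma bidding_value_weakly_dominated:
  assumes "full_support_dist x p" "bidfun x \<beta>" "v \<le> x" "\<beta> v = v" "2 \<le> v"
  shows "weakly_dominated n x p \<beta>"
proof (rule weakly_dominated_by_deviation[OF assms(2,3), of "v - 1"])
  show "p v > 0" using assms(1,3) unfolding full_support_dist_def by auto
  show "(real v - real (\<beta> v)) * win_prob n x p G (\<beta> v)
      \<le> (real v - real (v - 1)) * win_prob n x p G (v - 1)" for G
    using assms(4,5) win_prob_nonneg[OF assms(1), of n G "v - 1"] by simp
  show "(real v - real (\<beta> v)) * win_prob n x p (\<lambda>_ _. 0) (\<beta> v)
      < (real v - real (v - 1)) * win_prob n x p (\<lambda>_ _. 0) (v - 1)"
    using assms(4,5) win_prob_const_zero[OF assms(1), of "v - 1" n] by simp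
qed (use assms(3) in simp)

lemma symmetric_equilibrium_bid_le_value:
  assumes "n \<ge> 2" "full_support_dist x p" "symmetric_equilibrium n x p \<beta>" "v \<le> x"
  shows "\<beta> v \<le> v"
  using overbidding_weakly_dominated[OF assms(1,2) _ assms(4)] assms(3)
  unfolding symmetric_equilibrium_def by (meson not_le)

lemma symmetric_equilibrium_bid_less_value:
  assumes "n \<ge> 2" "full_support_dist x p" "symmetric_equilibrium n x p \<beta>" "v \<le> x" "2 \<le> v"
  shows "\<beta> v < v"
  using symmetric_equilibrium_bid_le_value[OF assms(1-4)] assms(3)
    bidding_value_weakly_dominated[OF assms(2) _ assms(4) _ assms(5)]
  unfolding symmetric_equilibrium_def by fastforce

lemma symmetric_equilibrium_best_response:
  assumes "full_support_dist x p" "symmetric_equilibrium n x p \<beta>" "v \<le> x" "c \<le> x"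
  shows "(real v - real c) * win_prob n x p (\<lambda>_. \<beta>) c
      \<le> (real v - real (\<beta> v)) * win_prob n x p (\<lambda>_. \<beta>) (\<beta> v)"
proof -
  have "bidfun x \<beta>" and opt: "\<And>\<gamma>. bidfun x \<gamma> \<Longrightarrow> payoff n x p \<gamma> (\<lambda>_. \<beta>) \<le> payoff n x p \<beta> (\<lambda>_. \<beta>)"
    using assms(2) unfolding symmetric_equilibrium_def by auto
  then have "bidfun x (\<beta>(v := c))" using assms(4) unfolding bidfun_def by auto
  from opt[OF this] have "p v * ((real v - real c) * win_prob n x p (\<lambda>_. \<beta>) c
      - (real v - real (\<beta> v)) * win_prob n x p (\<lambda>_. \<beta>) (\<beta> v)) \<le> 0"
    unfolding payoff_fun_upd[OF assms(3)] by simp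
  moreover have "p v > 0" using assms(1,3) unfolding full_support_dist_def by auto
  ultimately show ?thesis by (simp add: mult_le_0_iff)
qed

text \<open>Single crossing of the payoffs \<open>(v - b) * W b\<close> in the type \<open>v\<close>.\<close>
lemma bid_order_of_revealed_preference:
  fixes v v' b b' A B :: real
  assumes "v < v'" "A > 0" "B \<le> A"
    and "(v - b') * B \<le> (v - b) * A" "(v' - b) * A \<le> (v' - b') * B"
  shows "b \<le> b'"
proof -
  have "(v - v') * B \<le> (v - v') * A" using assms(4,5) by (simp add: algebra_simps)
  then have "A = B" using assms(1,3) by (simp add: mult_le_cancel_left)
  then have "(b - b') * A \<le> 0" using assms(4) by (simp add: algebra_simps)
  then show ?thesis using assms(2) by (simp add: mult_le_0_iff)
qed

lemma symmetric_equilibrium_mono: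
  assumes "full_support_dist x p" "symmetric_equilibrium n x p \<beta>" "v \<le> v'" "v' \<le> x"
  shows "\<beta> v \<le> \<beta> v'"
proof (rule ccontr)
  assume "\<not> \<beta> v \<le> \<beta> v'"
  then have lt: "\<beta> v' < \<beta> v" by simp
  then have "v < v'" using assms(3) by (cases "v = v'") auto
  have "bidfun x \<beta>" using assms(2) unfolding symmetric_equilibrium_def by simp
  then have bids: "\<beta> v \<le> x" "\<beta> v' \<le> x" using assms(3,4) unfolding bidfun_def by auto
  let ?W = "win_prob n x p (\<lambda>_. \<beta>)"
  have "prob_below x p \<beta> (\<beta> v) > 0" using prob_below_pos[OF assms(1,4), of \<beta> "\<beta> v"] lt by simp
  then have "?W (\<beta> v) > 0" unfolding win_prob_symmetric by simp
  moreover have "?W (\<beta> v') \<le> ?W (\<beta> v)" unfolding win_prob_symmetric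
    using prob_below_mono[OF assms(1), of "\<beta> v'" "\<beta> v" \<beta>] lt prob_below_nonneg[OF assms(1)]
    by (intro power_mono) auto
  ultimately have "real (\<beta> v) \<le> real (\<beta> v')"
    using bid_order_of_revealed_preference[of v v' "?W (\<beta> v)" "?W (\<beta> v')" "\<beta> v'" "\<beta> v"]
      symmetric_equilibrium_best_response[OF assms(1,2) _ bids(2), of v]
      symmetric_equilibrium_best_response[OF assms(1,2) assms(4) bids(1)]
      \<open>v < v'\<close> assms(4) by simp
  with lt show False by simp
qed

text \<open>The hypothesis \<open>1 \<le> v\<close> gives \<open>\<beta>' (v+1) < v + 1\<close>, which is what
  allows cancelling the factor \<open>v + 1 - b'\<close>.\<close>
lemma symmetric_equilibria_agree_step:
  assumes "n \<ge> 2" "full_support_dist x p"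
    and eq: "symmetric_equilibrium n x p \<beta>" and eq': "symmetric_equilibrium n x p \<beta>'"
    and "1 \<le> v" "Suc v \<le> x" "\<And>w. w \<le> v \<Longrightarrow> \<beta> w = \<beta>' w"
  shows "\<not> \<beta> (Suc v) < \<beta>' (Suc v)"
proof
  define b b' where "b = \<beta> (Suc v)" and "b' = \<beta>' (Suc v)"
  assume "\<beta> (Suc v) < \<beta>' (Suc v)"
  then have "b < b'" unfolding b_def b'_def .
  have mono: "\<beta> w \<le> \<beta> w'" "\<beta>' w \<le> \<beta>' w'" if "w \<le> w'" "w' \<le> x" for w w'
    using symmetric_equilibrium_mono[OF assms(2) eq that] symmetric_equilibrium_mono[OF assms(2) eq' that]
    by auto
  have "bidfun x \<beta>" "bidfun x \<beta>'" using eq eq' unfolding symmetric_equilibrium_def by auto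
  then have bids: "b \<le> x" "b' \<le> x" using assms(6) unfolding bidfun_def b_def b'_def by auto
  have "b' < Suc v"
    using symmetric_equilibrium_bid_less_value[OF assms(1,2) eq' assms(6)] assms(5) unfolding b'_def by simp
  let ?W = "win_prob n x p (\<lambda>_. \<beta>)" and ?W' = "win_prob n x p (\<lambda>_. \<beta>')"
  have below_b: "prob_below x p \<beta> b = prob_below x p \<beta>' b"
  proof (rule prob_below_eq_if_agree_below[OF assms(7)])
    fix w assume "v < w" "w \<le> x"
    then have "Suc v \<le> w" by simp
    then show "b \<le> \<beta> w \<and> b \<le> \<beta>' w"
      using mono[OF _ \<open>w \<le> x\<close>] \<open>b < b'\<close> unfolding b_def b'_def by fastforce
  qed
  have "prob_below x p \<beta>' b' = (\<Sum>w\<le>v. p w)"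
  proof (rule prob_below_eq_sum_atMost)
    show "\<beta>' w < b'" if "w \<le> v" for w
      using that \<open>b < b'\<close> assms(6,7) mono(1)[of w "Suc v"] unfolding b_def by fastforce
    show "b' \<le> \<beta>' w" if "v < w" "w \<le> x" for w
      using that mono(2)[of "Suc v" w] unfolding b'_def by simp
  qed (use assms(6) in simp)
  also have "\<dots> < (\<Sum>w\<le>Suc v. p w)"
    using assms(2,6) unfolding full_support_dist_def by simp
  also have "\<dots> \<le> prob_below x p \<beta> b'"
  proof (rule sum_atMost_le_prob_below[OF assms(2,6)])
    show "\<beta> w < b'" if "w \<le> Suc v" for w
      using that \<open>b < b'\<close> assms(6) mono(1)[of w "Suc v"] unfolding b_def by simp
  qed
  finally have "?W' b' < ?W b'"
    unfolding win_prob_symmetric using prob_below_nonneg[OF assms(2)] assms(1)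
    by (intro power_strict_mono) auto
  moreover have "?W b = ?W' b" unfolding win_prob_symmetric below_b ..
  then have "(real (Suc v) - real b') * ?W b' \<le> (real (Suc v) - real b') * ?W' b'"
    using symmetric_equilibrium_best_response[OF assms(2) eq assms(6) bids(2)]
      symmetric_equilibrium_best_response[OF assms(2) eq' assms(6) bids(1)]
    unfolding b_def b'_def by simp
  then have "?W b' \<le> ?W' b'"
    using \<open>b' < Suc v\<close> by (simp add: mult_le_cancel_left)
  ultimately show False by simp
qed

theorem lemma5:
  fixes n x :: nat and p :: "nat \<Rightarrow> real" and \<beta> \<beta>' :: "nat \<Rightarrow> nat"
  assumes "n \<ge> 2"
    and "full_support_dist x p"
    and "symmetric_equilibrium n x p \<beta>"
    and "symmetric_equilibrium n x p \<beta>'"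
    and "\<beta> 1 = \<beta>' 1"
  shows "\<forall>v\<le>x. \<beta> v = \<beta>' v"
proof -
  have "\<forall>w\<le>v. \<beta> w = \<beta>' w" if "v \<le> x" for v
    using that
  proof (induction v)
    case 0
    then show ?case
      using symmetric_equilibrium_bid_le_value[OF assms(1,2,3)]
        symmetric_equilibrium_bid_le_value[OF assms(1,2,4)] by fastforce
  next
    case (Suc v)
    then have agree: "\<And>w. w \<le> v \<Longrightarrow> \<beta> w = \<beta>' w" by simp
    have "\<beta> (Suc v) = \<beta>' (Suc v)"
    proof (cases "v = 0")
      case False
      then show ?thesis
        using symmetric_equilibria_agree_step[OF assms(1-4) _ Suc.prems agree]
          symmetric_equilibria_agree_step[OF assms(1,2,4,3) _ Suc.prems agree[symmetric]] by simp
    qed (use assms(5) in simp)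
    with agree show ?case by (auto simp: le_Suc_eq)
  qed
  then show ?thesis by blast
qed

end
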